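(* Let $\theta>1$ and $\lambda>1$ be real numbers. For $N\ge 2$ and $1\le r\le N-1$ let \[ P_r(N,\theta)=\frac{r(1-\theta)\sum_{i=r}^{N-1}\frac{\theta^i}{i}}{1-\theta^N}, \] the probability of winning the weighted game of best choice on $N$ candidates with the strategy rejecting $r$ initial candidates. Then, with $r=N/\lambda$, \[ \lim_{N\to\infty} P_{N/\lambda}(N,\theta)=\frac{1}{\lambda}. \]
   Context: In the weighted game of best choice, a permutation $\pi$ of $\{1,\dots,N\}$ is drawn with probability proportional to $\theta^{\pi^{-1}(N)-1}$ (where $\pi^{-1}(N)$ is the position of the best candidate $N$); the player rejects the first $r$ candidates and then accepts the next candidate better than all previous ones, winning if that candidate is $N$. Here $N/\lambda$ is to be understood as an integer number of rejected candidates (e.g. taking $N$ along values for which it is an integer, or rounding). *)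

theory Defs
  imports Complex_Main
begin

definition P_win :: "nat \<Rightarrow> nat \<Rightarrow> real \<Rightarrow> real" where
  "P_win r N \<theta> = (real r * (1 - \<theta>) * (\<Sum>i = r..N - 1. \<theta> ^ i / real i)) / (1 - \<theta> ^ N)"

end

theory Submission
  imports Defs
begin

text \<open>
  Substituting \<open>i = N - k\<close> and \<open>x = 1/\<theta>\<close> writes the sum in \<open>P_win\<close> as
  \<open>\<theta>^N/N\<close> times \<open>\<Sum>k=1..N-r. x^k N/(N-k)\<close>. Since \<open>1 \<le> N/(N-k) \<le> 1 + k/r\<close>, this
  sum lies between a partial geometric sum and that partial sum plus \<open>x/((1-x)^2 r)\<close>,
  so it tends to \<open>x/(1-x) = 1/(\<theta>-1)\<close> once \<open>r\<close> and \<open>N - r\<close> both tend to infinity.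
  The remaining factors \<open>r/N\<close>, \<open>\<theta> - 1\<close> and \<open>1/(1-x^N)\<close> contribute \<open>1/\<lambda>\<close>, \<open>\<theta>-1\<close>, \<open>1\<close>.
\<close>

lemma sum_of_nat_times_power:
  fixes x :: "'a::comm_ring_1"
  shows "(1 - x)^2 * (\<Sum>k<m. of_nat k * x^k) = x - of_nat m * x^m + (of_nat m - 1) * x^Suc m"
proof (induction m)
  case 0
  then show ?case by simp
next
  case (Suc m)
  have "(1 - x)^2 * (\<Sum>k<Suc m. of_nat k * x^k)
      = (1 - x)^2 * (\<Sum>k<m. of_nat k * x^k) + (1 - x)^2 * (of_nat m * x^m)"
    by (simp add: algebra_simps)
  also have "\<dots> = x - of_nat (Suc m) * x^Suc m + (of_nat (Suc m) - 1) * x^Suc (Suc m)"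
    unfolding Suc.IH by (simp add: power2_eq_square algebra_simps)
  finally show ?case .
qed

lemma sum_of_nat_times_power_le:
  fixes x :: real
  assumes "0 \<le> x" "x < 1"
  shows "(\<Sum>k<m. real k * x^k) \<le> x / (1 - x)^2"
proof -
  have "(real m - 1) * x^Suc m \<le> real m * x^m"
    using assms by (intro mult_mono power_decreasing) auto
  then have "(1 - x)^2 * (\<Sum>k<m. real k * x^k) \<le> x"
    unfolding sum_of_nat_times_power by simp
  then show ?thesis
    using assms by (simp add: pos_le_divide_eq mult.commute)
qed

lemma sum_power_from_one_tendsto:
  fixes x :: real
  assumes "0 \<le> x" "x < 1" and m: "filterlim m at_top F"
  shows "((\<lambda>n. \<Sum>k=1..m n. x^k) \<longlongrightarrow> x / (1 - x)) F"
proof -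
  have "(\<Sum>k=1..j. x^k) = (x - x * x^j) / (1 - x)" for j
    using assms by (cases j) (simp_all add: sum_gp field_simps)
  moreover have "((\<lambda>n. (x - x * x^m n) / (1 - x)) \<longlongrightarrow> (x - x * 0) / (1 - x)) F"
    using assms by (intro tendsto_intros filterlim_compose[OF LIMSEQ_power_zero m]) auto
  ultimately show ?thesis by simp
qed

definition reversed_tail_sum :: "real \<Rightarrow> nat \<Rightarrow> nat \<Rightarrow> real" where
  "reversed_tail_sum x r N = (\<Sum>k=1..N - r. x^k * real N / real (N - k))"

lemma sum_power_div_eq_reversed_tail_sum:
  fixes \<theta> :: real
  assumes "\<theta> \<noteq> 0" "1 \<le> r" "r \<le> N"
  shows "(\<Sum>i=r..N - 1. \<theta>^i / real i) = \<theta>^N / real N * reversed_tail_sum (1 / \<theta>) r N"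
proof -
  have "(\<Sum>i=r..N - 1. \<theta>^i / real i) = (\<Sum>k=1..N - r. \<theta>^(N - k) / real (N - k))"
    using assms by (intro sum.reindex_bij_witness[where i="\<lambda>i. N - i" and j="\<lambda>k. N - k"]) auto
  also have "\<dots> = (\<Sum>k=1..N - r. \<theta>^N / real N * ((1 / \<theta>)^k * real N / real (N - k)))"
  proof (intro sum.cong refl)
    fix k assume "k \<in> {1..N - r}"
    then have "\<theta>^N = \<theta>^(N - k) * \<theta>^k" "N > 0"
      using assms by (auto simp flip: power_add)
    then show "\<theta>^(N - k) / real (N - k) = \<theta>^N / real N * ((1 / \<theta>)^k * real N / real (N - k))"
      using assms by (simp add: power_divide field_simps)
  qed
  finally show ?thesis
    unfolding reversed_tail_sum_def by (simp add: sum_distrib_left)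
qed

lemma P_win_eq_reversed_tail_sum:
  fixes \<theta> :: real
  assumes "\<theta> \<noteq> 0" "1 \<le> r" "r \<le> N"
  shows "P_win r N \<theta> = real r / real N * (\<theta> - 1) * reversed_tail_sum (1 / \<theta>) r N / (1 - (1 / \<theta>)^N)"
proof (cases "\<theta>^N = 1")
  case True
  \<comment> \<open>both sides are junk values, obtained by dividing by zero\<close>
  then show ?thesis by (simp add: P_win_def power_one_over)
next
  case False
  with assms show ?thesis
    unfolding P_win_def sum_power_div_eq_reversed_tail_sum[OF assms]
    by (simp add: power_one_over field_simps)
qed

lemma reversed_tail_sum_bounds:
  fixes x :: real
  assumes "0 \<le> x" "x < 1" "1 \<le> r"
  shows "(\<Sum>k=1..N - r. x^k) \<le> reversed_tail_sum x r N"
    and "reversed_tail_sum x r N \<le> (\<Sum>k=1..N - r. x^k) + x / (1 - x)^2 / real r"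
proof -
  have ratio: "1 \<le> real N / real (N - k)" "real N / real (N - k) \<le> 1 + real k / real r"
    if "k \<in> {1..N - r}" for k
  proof -
    from that assms have "real r \<le> real (N - k)" "k \<le> N" by auto
    moreover from this assms have "real N / real (N - k) = 1 + real k / real (N - k)"
      by (simp add: field_simps)
    ultimately show "1 \<le> real N / real (N - k)" "real N / real (N - k) \<le> 1 + real k / real r"
      using assms by (auto intro: divide_left_mono)
  qed
  show "(\<Sum>k=1..N - r. x^k) \<le> reversed_tail_sum x r N"
    unfolding reversed_tail_sum_def
  proof (intro sum_mono)
    fix k assume "k \<in> {1..N - r}"
    then have "x^k * 1 \<le> x^k * (real N / real (N - k))"
      using assms by (intro mult_left_mono ratio) auto
    then show "x^k \<le> x^k * real N / real (N - k)" by simp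
  qed
  have "reversed_tail_sum x r N \<le> (\<Sum>k=1..N - r. x^k + real k * x^k / real r)"
    unfolding reversed_tail_sum_def
  proof (intro sum_mono)
    fix k assume "k \<in> {1..N - r}"
    then have "x^k * (real N / real (N - k)) \<le> x^k * (1 + real k / real r)"
      using assms by (intro mult_left_mono ratio) auto
    then show "x^k * real N / real (N - k) \<le> x^k + real k * x^k / real r"
      by (simp add: algebra_simps)
  qed
  also have "\<dots> = (\<Sum>k=1..N - r. x^k) + (\<Sum>k=1..N - r. real k * x^k) / real r"
    by (simp add: sum.distrib sum_divide_distrib)
  also have "(\<Sum>k=1..N - r. real k * x^k) \<le> (\<Sum>k<Suc (N - r). real k * x^k)"
    using assms by (intro sum_mono2) auto
  also have "\<dots> \<le> x / (1 - x)^2"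
    using assms(1,2) by (rule sum_of_nat_times_power_le)
  finally show "reversed_tail_sum x r N \<le> (\<Sum>k=1..N - r. x^k) + x / (1 - x)^2 / real r"
    using assms by (simp add: divide_right_mono)
qed

lemma reversed_tail_sum_tendsto:
  fixes x :: real
  assumes "0 \<le> x" "x < 1"
    and r: "filterlim r at_top F" and gap: "filterlim (\<lambda>n. N n - r n) at_top F"
  shows "((\<lambda>n. reversed_tail_sum x (r n) (N n)) \<longlongrightarrow> x / (1 - x)) F"
proof (rule tendsto_sandwich)
  have r_pos: "eventually (\<lambda>n. 1 \<le> r n) F"
    using r by (simp add: filterlim_at_top)
  show "eventually (\<lambda>n. (\<Sum>k=1..N n - r n. x^k) \<le> reversed_tail_sum x (r n) (N n)) F"
    using r_pos by eventually_elim (use assms(1,2) in \<open>rule reversed_tail_sum_bounds\<close>)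
  show "eventually (\<lambda>n. reversed_tail_sum x (r n) (N n)
      \<le> (\<Sum>k=1..N n - r n. x^k) + x / (1 - x)^2 / real (r n)) F"
    using r_pos by eventually_elim (use assms(1,2) in \<open>rule reversed_tail_sum_bounds\<close>)
  show geom: "((\<lambda>n. \<Sum>k=1..N n - r n. x^k) \<longlongrightarrow> x / (1 - x)) F"
    using assms(1,2) gap by (rule sum_power_from_one_tendsto)
  have "((\<lambda>n. x / (1 - x)^2 / real (r n)) \<longlongrightarrow> 0) F"
    by (intro tendsto_divide_0[OF tendsto_const] filterlim_at_top_imp_at_infinity
        filterlim_compose[OF filterlim_real_sequentially r])
  from tendsto_add[OF geom this]
  show "((\<lambda>n. (\<Sum>k=1..N n - r n. x^k) + x / (1 - x)^2 / real (r n)) \<longlongrightarrow> x / (1 - x)) F"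
    by simp
qed

lemma filterlim_nat_floor_divide_at_top:
  fixes lam :: real
  assumes "0 < lam"
  shows "filterlim (\<lambda>N. nat \<lfloor>real N / lam\<rfloor>) at_top sequentially"
proof -
  have "filterlim (\<lambda>N. 1 / lam * real N) at_top sequentially"
    using assms by (intro filterlim_tendsto_pos_mult_at_top[OF tendsto_const] filterlim_real_sequentially) auto
  then show ?thesis
    by (intro filterlim_compose[OF filterlim_nat_sequentially]
        filterlim_compose[OF filterlim_floor_sequentially]) simp
qed

lemma nat_floor_divide_le:
  fixes lam :: real
  assumes "1 \<le> lam"
  shows "nat \<lfloor>real N / lam\<rfloor> \<le> N"
proof -
  have "real N / lam \<le> real N"
    using assms by (simp add: divide_le_eq mult_le_cancel_left1)
  then show ?thesis
    by (metis floor_mono floor_of_nat nat_int nat_mono)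
qed

lemma filterlim_diff_nat_floor_divide_at_top:
  fixes lam :: real
  assumes "1 < lam"
  shows "filterlim (\<lambda>N. N - nat \<lfloor>real N / lam\<rfloor>) at_top sequentially"
  unfolding filterlim_sequentially_iff_filterlim_real
proof (rule filterlim_at_top_mono)
  show "filterlim (\<lambda>N. (1 - 1 / lam) * real N) at_top sequentially"
    using assms by (intro filterlim_tendsto_pos_mult_at_top[OF tendsto_const] filterlim_real_sequentially) auto
  show "eventually (\<lambda>N. (1 - 1 / lam) * real N \<le> real (N - nat \<lfloor>real N / lam\<rfloor>)) sequentially"
  proof (intro always_eventually allI)
    fix N
    have "real (nat \<lfloor>real N / lam\<rfloor>) \<le> real N / lam"
      using assms by simp
    with nat_floor_divide_le[of lam N] assms
    show "(1 - 1 / lam) * real N \<le> real (N - nat \<lfloor>real N / lam\<rfloor>)"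
      by (simp add: of_nat_diff algebra_simps)
  qed
qed

lemma nat_floor_divide_ratio_tendsto:
  fixes lam :: real
  assumes "0 < lam"
  shows "(\<lambda>N. real (nat \<lfloor>real N / lam\<rfloor>) / real N) \<longlonglongrightarrow> 1 / lam"
proof (rule tendsto_sandwich)
  show "eventually (\<lambda>N. 1 / lam - 1 / real N \<le> real (nat \<lfloor>real N / lam\<rfloor>) / real N) sequentially"
    using eventually_gt_at_top[of 0]
  proof eventually_elim
    case (elim N)
    have "1 / lam - 1 / real N = (real N / lam - 1) / real N"
      using elim by (simp add: field_simps)
    also have "\<dots> \<le> real (nat \<lfloor>real N / lam\<rfloor>) / real N"
      by (intro divide_right_mono) linarith+
    finally show ?case .
  qed
  show "eventually (\<lambda>N. real (nat \<lfloor>real N / lam\<rfloor>) / real N \<le> 1 / lam) sequentially"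
    using eventually_gt_at_top[of 0]
  proof eventually_elim
    case (elim N)
    have "real (nat \<lfloor>real N / lam\<rfloor>) \<le> real N / lam"
      using assms by (simp add: divide_nonneg_pos)
    with elim show ?case
      by (simp add: field_simps)
  qed
  show "(\<lambda>N. 1 / lam - 1 / real N) \<longlonglongrightarrow> 1 / lam"
    using tendsto_diff[OF tendsto_const[of "1 / lam"] lim_inverse_n'] by simp
qed (rule tendsto_const)

theorem theorem3p3:
  fixes \<theta> lam :: real
  assumes "\<theta> > 1" and "lam > 1"
  shows "(\<lambda>N. P_win (nat \<lfloor>real N / lam\<rfloor>) N \<theta>) \<longlonglongrightarrow> 1 / lam"
proof -
  define r where "r N = nat \<lfloor>real N / lam\<rfloor>" for N
  define x where "x = 1 / \<theta>"
  have x: "0 \<le> x" "x < 1"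
    using assms by (auto simp: x_def)
  have r: "filterlim r at_top sequentially"
    unfolding r_def using assms by (intro filterlim_nat_floor_divide_at_top) auto
  have "(\<lambda>N. real (r N) / real N * (\<theta> - 1) * reversed_tail_sum x (r N) N / (1 - x^N))
      \<longlonglongrightarrow> 1 / lam * (\<theta> - 1) * (x / (1 - x)) / (1 - 0)"
    unfolding r_def using assms x
    by (intro tendsto_intros nat_floor_divide_ratio_tendsto reversed_tail_sum_tendsto
        filterlim_nat_floor_divide_at_top filterlim_diff_nat_floor_divide_at_top LIMSEQ_power_zero) auto
  moreover have "1 / lam * (\<theta> - 1) * (x / (1 - x)) / (1 - 0) = 1 / lam"
    using assms by (simp add: x_def field_simps)
  moreover have "eventually (\<lambda>N. real (r N) / real N * (\<theta> - 1) * reversed_tail_sum x (r N) N / (1 - x^N)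
      = P_win (r N) N \<theta>) sequentially"
    using r unfolding filterlim_at_top
  proof (rule eventually_mono[OF spec[of _ 1]])
    fix N assume "1 \<le> r N"
    moreover have "r N \<le> N"
      unfolding r_def using assms by (intro nat_floor_divide_le) auto
    ultimately show "real (r N) / real N * (\<theta> - 1) * reversed_tail_sum x (r N) N / (1 - x^N)
        = P_win (r N) N \<theta>"
      using assms unfolding x_def by (simp add: P_win_eq_reversed_tail_sum)
  qed
  ultimately show ?thesis
    unfolding r_def by (auto elim: Lim_transform_eventually)
qed

end
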